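(* The class of unit-distance graphs is $(6,1)$-disjointness-expressing.
   Context: A unit-distance graph is a graph whose vertices are points in the plane, two points being adjacent iff their Euclidean distance equals 1. A class $\mathcal{C}$ of graphs is $(s,\kappa)$-disjointness-expressing if for some constant $\alpha>0$, for every positive integer $N$ and every $X\subseteq\{1,\dots,N\}$ one can define graphs $L(X)$ and $R(X)$, each containing a labelled set $S$ of special vertices, such that for all $A,B\subseteq\{1,\dots,N\}$: (i) the graph $g(L(A),R(B))$ obtained by identifying each vertex of $S$ in $L(A)$ with the corresponding vertex of $S$ in $R(B)$ is connected and has at most $\alpha N^{1/\kappa}$ vertices; (ii) the subgraph of $g(L(A),R(B))$ induced by the closed neighborhood $N[S]$ is independent of $A,B$ (for all $A,A',B,B'$ there is an isomorphism between these induced subgraphs that is the identity on $S$) and has at most $s$ vertices; (iii) $g(L(A),R(B))\in\mathcal{C}$ if and only if $A\cap B=\emptyset$. *)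

theory Defs
  imports "HOL-Analysis.Analysis"
begin

type_synonym 'v graph = "'v set \<times> ('v \<times> 'v) set"

definition verts :: "'v graph \<Rightarrow> 'v set" where "verts G = fst G"
definition edges :: "'v graph \<Rightarrow> ('v \<times> 'v) set" where "edges G = snd G"

definition simple_graph :: "'v graph \<Rightarrow> bool" where
  "simple_graph G \<longleftrightarrow> finite (verts G) \<and> edges G \<subseteq> verts G \<times> verts G
     \<and> sym (edges G) \<and> irrefl (edges G)"

definition connected_graph :: "'v graph \<Rightarrow> bool" where
  "connected_graph G \<longleftrightarrow> (\<forall>x\<in>verts G. \<forall>y\<in>verts G. (x, y) \<in> (edges G)\<^sup>*)"

definition unit_distance_graph :: "'v graph \<Rightarrow> bool" where
  "unit_distance_graph G \<longleftrightarrow> simple_graph G \<and>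
     (\<exists>p :: 'v \<Rightarrow> real^2. inj_on p (verts G) \<and>
        (\<forall>x\<in>verts G. \<forall>y\<in>verts G. (x, y) \<in> edges G \<longleftrightarrow> dist (p x) (p y) = 1))"

text \<open>Gluing g(L,R) along the special set S (contained in both vertex sets):
  vertices of L are tagged Inl, vertices of R outside S are tagged Inr, and a
  special vertex s of R is identified with the vertex Inl s of L.\<close>
definition glue_map :: "'v set \<Rightarrow> 'v \<Rightarrow> 'v + 'v" where
  "glue_map S x = (if x \<in> S then Inl x else Inr x)"

definition glue :: "'v graph \<Rightarrow> 'v graph \<Rightarrow> 'v set \<Rightarrow> ('v + 'v) graph" where
  "glue L R S =
     (Inl ` verts L \<union> Inr ` (verts R - S),
      {(Inl x, Inl y) | x y. (x, y) \<in> edges L} \<union>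
      {(glue_map S x, glue_map S y) | x y. (x, y) \<in> edges R})"

definition closed_nbhd :: "'w graph \<Rightarrow> 'w set \<Rightarrow> 'w set" where
  "closed_nbhd G T = T \<union> {v \<in> verts G. \<exists>t\<in>T. (t, v) \<in> edges G}"

definition induced_iso :: "'w graph \<Rightarrow> 'w set \<Rightarrow> 'u graph \<Rightarrow> 'u set \<Rightarrow> ('w \<Rightarrow> 'u) \<Rightarrow> bool" where
  "induced_iso G1 W1 G2 W2 f \<longleftrightarrow> bij_betw f W1 W2 \<and>
     (\<forall>x\<in>W1. \<forall>y\<in>W1. (x, y) \<in> edges G1 \<longleftrightarrow> (f x, f y) \<in> edges G2)"

definition disjointness_expressing ::
  "((nat + nat) graph \<Rightarrow> bool) \<Rightarrow> nat \<Rightarrow> nat \<Rightarrow> bool" where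
  "disjointness_expressing C s \<kappa> \<longleftrightarrow>
    (\<exists>\<alpha>::real. \<alpha> > 0 \<and>
      (\<forall>N::nat. N > 0 \<longrightarrow>
        (\<exists>(S::nat set) (L::nat set \<Rightarrow> nat graph) (R::nat set \<Rightarrow> nat graph).
          (\<forall>X. X \<subseteq> {1..N} \<longrightarrow>
             simple_graph (L X) \<and> simple_graph (R X) \<and>
             S \<subseteq> verts (L X) \<and> S \<subseteq> verts (R X)) \<and>
          (\<forall>A B. A \<subseteq> {1..N} \<longrightarrow> B \<subseteq> {1..N} \<longrightarrow>
             connected_graph (glue (L A) (R B) S) \<and>
             real (card (verts (glue (L A) (R B) S))) \<le> \<alpha> * real N powr (1 / real \<kappa>) \<and>
             card (closed_nbhd (glue (L A) (R B) S) (Inl ` S)) \<le> s \<and>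
             (C (glue (L A) (R B) S) \<longleftrightarrow> A \<inter> B = {})) \<and>
          (\<forall>A A' B B'. A \<subseteq> {1..N} \<longrightarrow> A' \<subseteq> {1..N} \<longrightarrow> B \<subseteq> {1..N} \<longrightarrow> B' \<subseteq> {1..N} \<longrightarrow>
             (\<exists>f. induced_iso (glue (L A) (R B) S)
                              (closed_nbhd (glue (L A) (R B) S) (Inl ` S))
                              (glue (L A') (R B') S)
                              (closed_nbhd (glue (L A') (R B') S) (Inl ` S)) f
                  \<and> (\<forall>x\<in>S. f (Inl x) = Inl x))))))"

end

theory Submission
  imports Defs "HOL-Library.Nat_Bijection"
begin

text \<open>
  The left graph is a comb in the triangular lattice: a two-row strip of unit triangles with,
  for every \<open>i \<in> A\<close>, a tooth reaching down to the x-axis at \<open>(4i + 1, 0)\<close>; the right graph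
  is the mirror image in the x-axis of the comb for \<open>B\<close>; the two are glued along the lattice
  points \<open>(0, 0)\<close> and \<open>(1, 0)\<close>. Every point of a comb is reached from the triangle
  \<open>(0, 0), (1, 0), (0, 1)\<close> by completing rhombi of two unit triangles, and in the plane the
  fourth vertex of such a rhombus is determined by the other three. So in any unit-distance
  realization each comb is an affine image of the lattice, and on the x-axis both affine maps are
  determined by the two shared seam points: for \<open>i \<in> A \<inter> B\<close> the two tooth tips at
  \<open>(4i + 1, 0)\<close> would be realized at the same point. If \<open>A\<close> and \<open>B\<close> are disjoint, the combs
  meet only in the seam and the standard embedding of the lattice realizes the glued graph.
  The seam always has the same six closed neighbours, and the glued graph has \<open>O(N)\<close> vertices.
\<close>

section \<open>Unit rhombi in the plane\<close>

lemma inner_real2: "inner (x::real^2) y = x$1 * y$1 + x$2 * y$2"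
  by (simp add: inner_vec_def sum_2)

text \<open>The only place where the dimension of the plane is used.\<close>

lemma plane_orthogonal_eq_0:
  fixes c d t :: "real^2"
  assumes "c \<noteq> 0" "d \<noteq> 0" "inner d c = 0" "inner t c = 0" "inner d t = 0"
  shows "t = 0"
proof -
  have cross: "d$1 * t$2 - d$2 * t$1 = 0"
  proof -
    have "c$1 * (d$1 * t$2 - d$2 * t$1) = 0" "c$2 * (d$1 * t$2 - d$2 * t$1) = 0"
      using assms(3,4) unfolding inner_real2 by algebra+
    moreover have "c$1 \<noteq> 0 \<or> c$2 \<noteq> 0"
      using assms(1) by (auto simp: vec_eq_iff forall_2)
    ultimately show ?thesis by auto
  qed
  have "inner d d * inner t t = (inner d t)^2 + (d$1 * t$2 - d$2 * t$1)^2"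
    unfolding inner_real2 by algebra
  then have "inner d d * inner t t = 0" using assms(5) cross by simp
  then show ?thesis using assms(2) by simp
qed

lemma rhombus_fourth_vertex:
  fixes u v w x :: "real^2"
  assumes "dist u v = 1" "dist x u = 1" "dist x v = 1" "dist w u = 1" "dist w v = 1" "x \<noteq> w"
  shows "x = u + v - w"
proof -
  define a b c where "a = x - u" and "b = w - u" and "c = v - u"
  have unit: "inner a a = 1" "inner b b = 1" "inner c c = 1" "inner (a - c) (a - c) = 1" "inner (b - c) (b - c) = 1"
    using assms(1-5) unfolding a_def b_def c_def dist_norm norm_eq_1[symmetric]
    by (simp_all add: norm_minus_commute)
  have ac: "inner a c = 1/2" and bc: "inner b c = 1/2"
    using unit by (simp_all add: inner_diff_left inner_diff_right inner_commute)
  have "a + b - c = 0"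
  proof (rule plane_orthogonal_eq_0)
    show "c \<noteq> 0" using unit(3) by auto
    show "a - b \<noteq> 0" using assms(6) unfolding a_def b_def by simp
    show "inner (a - b) c = 0" using ac bc by (simp add: inner_diff_left)
    show "inner (a + b - c) c = 0" using ac bc unit(3) by (simp add: inner_diff_left inner_add_left)
    show "inner (a - b) (a + b - c) = 0"
      using ac bc unit(1,2) by (simp add: inner_diff_left inner_diff_right inner_add_right inner_commute)
  qed
  then show ?thesis unfolding a_def b_def c_def by (simp add: algebra_simps)
qed

section \<open>The triangular lattice\<close>

text \<open>Skew coordinates: \<open>(a, b)\<close> stands for \<open>a e\<^sub>1 + b e\<^sub>2\<close> with \<open>e\<^sub>1 = (1, 0)\<close> and
  \<open>e\<^sub>2 = (1/2, \<surd>3/2)\<close>, see \<open>tri_point\<close>.\<close>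

definition tri_units :: "(int \<times> int) set" where
  "tri_units = {(1, 0), (-1, 0), (0, 1), (0, -1), (1, -1), (-1, 1)}"

definition tri_adj :: "int \<times> int \<Rightarrow> int \<times> int \<Rightarrow> bool" where
  "tri_adj z w \<longleftrightarrow> w - z \<in> tri_units"

definition tri_norm :: "int \<times> int \<Rightarrow> int" where
  "tri_norm d = (fst d)\<^sup>2 + fst d * snd d + (snd d)\<^sup>2"

definition tri_point :: "int \<times> int \<Rightarrow> real^2" where
  "tri_point z = vector [of_int (fst z) + of_int (snd z) / 2, of_int (snd z) * sqrt 3 / 2]"

lemma uminus_tri_units: "- d \<in> tri_units \<longleftrightarrow> d \<in> tri_units"
  by (cases d) (auto simp: tri_units_def)

lemma double_not_tri_unit: "d \<in> tri_units \<Longrightarrow> - d - d \<notin> tri_units"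
  by (auto simp: tri_units_def)

lemma tri_adj_sym: "tri_adj z w \<Longrightarrow> tri_adj w z"
  by (metis tri_adj_def minus_diff_eq uminus_tri_units)

lemma tri_adj_irrefl: "\<not> tri_adj z z"
  by (simp add: tri_adj_def tri_units_def zero_prod_def)

lemma tri_adj_rhombus:
  assumes "tri_adj u v" "tri_adj w u" "tri_adj w v"
  shows "tri_adj (u + v - w) u" "tri_adj (u + v - w) v" "u + v - w \<noteq> w"
proof -
  have "u - (u + v - w) = w - v" "v - (u + v - w) = w - u"
    by (simp_all add: algebra_simps)
  then show "tri_adj (u + v - w) u" "tri_adj (u + v - w) v"
    using tri_adj_sym[OF assms(3)] tri_adj_sym[OF assms(2)] by (simp_all add: tri_adj_def)
  show "u + v - w \<noteq> w"
  proof
    assume "u + v - w = w"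
    then have "v - u = - (u - w) - (u - w)" by (simp add: algebra_simps)
    moreover have "v - u \<in> tri_units" "u - w \<in> tri_units"
      using assms(1,2) by (simp_all add: tri_adj_def)
    ultimately show False using double_not_tri_unit by metis
  qed
qed

lemma dist_tri_point_sq:
  "(dist (tri_point z) (tri_point w))\<^sup>2 = of_int (tri_norm (w - z))"
proof -
  define a b where "a = real_of_int (fst w - fst z)" and "b = real_of_int (snd w - snd z)"
  have "(dist (tri_point z) (tri_point w))\<^sup>2 = (a + b / 2)\<^sup>2 + (b * sqrt 3 / 2)\<^sup>2"
    unfolding dist_norm power2_norm_eq_inner inner_real2 tri_point_def a_def b_def
    by (simp add: power2_eq_square field_simps)
  also have "(b * sqrt 3 / 2)\<^sup>2 = 3 * b\<^sup>2 / 4"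
    by (simp add: power_mult_distrib power_divide)
  also have "(a + b / 2)\<^sup>2 + 3 * b\<^sup>2 / 4 = a\<^sup>2 + a * b + b\<^sup>2"
    by (simp add: power2_eq_square field_simps)
  also have "\<dots> = of_int (tri_norm (w - z))"
    by (simp add: tri_norm_def a_def b_def)
  finally show ?thesis .
qed

lemma tri_norm_eq_1_iff: "tri_norm d = 1 \<longleftrightarrow> d \<in> tri_units"
proof
  obtain a b where d: "d = (a, b)" by force
  assume "tri_norm d = 1"
  then have h: "a\<^sup>2 + a * b + b\<^sup>2 = 1" by (simp add: tri_norm_def d)
  have "(2 * a + b)\<^sup>2 + 3 * b\<^sup>2 = 4" "(a + 2 * b)\<^sup>2 + 3 * a\<^sup>2 = 4"
    using h by algebra+
  then have "b\<^sup>2 \<le> 1" "a\<^sup>2 \<le> 1" by (smt (verit) zero_le_power2)+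
  then have "\<bar>a\<bar> \<le> 1" "\<bar>b\<bar> \<le> 1" by (simp_all add: abs_square_le_1)
  then have "a \<in> {-1, 0, 1}" "b \<in> {-1, 0, 1}" by auto
  then show "d \<in> tri_units" using h by (auto simp: d tri_units_def)
next
  show "d \<in> tri_units \<Longrightarrow> tri_norm d = 1" by (auto simp: tri_units_def tri_norm_def)
qed

lemma tri_norm_eq_0_iff: "tri_norm d = 0 \<longleftrightarrow> d = 0"
proof
  assume "tri_norm d = 0"
  moreover have "4 * tri_norm d = (2 * fst d + snd d)\<^sup>2 + 3 * (snd d)\<^sup>2"
    by (simp add: tri_norm_def power2_eq_square algebra_simps)
  ultimately have "(2 * fst d + snd d)\<^sup>2 + 3 * (snd d)\<^sup>2 = 0" by simp
  then have "snd d = 0" "2 * fst d + snd d = 0" by (smt (verit) zero_le_power2 power_eq_0_iff)+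
  then show "d = 0" by (simp add: prod_eq_iff)
qed (simp add: tri_norm_def)

lemma dist_tri_point_eq_1_iff: "dist (tri_point z) (tri_point w) = 1 \<longleftrightarrow> tri_adj z w"
proof -
  have "dist (tri_point z) (tri_point w) = 1 \<longleftrightarrow> (dist (tri_point z) (tri_point w))\<^sup>2 = 1"
    by (smt (verit) zero_le_dist power2_eq_1_iff)
  then show ?thesis by (simp add: dist_tri_point_sq tri_norm_eq_1_iff tri_adj_def)
qed

lemma inj_tri_point: "inj tri_point"
proof (rule injI)
  fix z w assume "tri_point z = tri_point w"
  then have "of_int (tri_norm (w - z)) = (0::real)" by (metis dist_self dist_tri_point_sq zero_power2)
  then show "z = w" by (simp add: tri_norm_eq_0_iff)
qed

lemma tri_adj_near: "tri_adj z w \<Longrightarrow> \<bar>fst w - fst z\<bar> \<le> 1 \<and> \<bar>snd w - snd z\<bar> \<le> 1"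
  by (auto simp: tri_adj_def tri_units_def prod_eq_iff)

definition lattice_edges :: "(int \<times> int) set \<Rightarrow> ((int \<times> int) \<times> (int \<times> int)) set" where
  "lattice_edges P = {(z, w). z \<in> P \<and> w \<in> P \<and> tri_adj z w}"

definition lattice_nbhd :: "(int \<times> int) set \<Rightarrow> (int \<times> int) set \<Rightarrow> (int \<times> int) set" where
  "lattice_nbhd P S = S \<union> {z \<in> P. \<exists>s\<in>S. tri_adj s z}"

section \<open>Rigidity of rhombus closures\<close>

definition affine_extension :: "(int \<times> int \<Rightarrow> 'a::real_vector) \<Rightarrow> int \<times> int \<Rightarrow> 'a" where
  "affine_extension q z =
     q 0 + of_int (fst z) *\<^sub>R (q (1, 0) - q 0) + of_int (snd z) *\<^sub>R (q (0, 1) - q 0)"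

lemma affine_extension_rhombus:
  "affine_extension q (u + v - w) = affine_extension q u + affine_extension q v - affine_extension q w"
  by (simp add: affine_extension_def algebra_simps)

inductive_set rhombus_closure :: "(int \<times> int) set \<Rightarrow> (int \<times> int) set" for P where
  base: "z \<in> {0, (1, 0), (0, 1)} \<Longrightarrow> z \<in> P \<Longrightarrow> z \<in> rhombus_closure P"
| rhombus: "u \<in> rhombus_closure P \<Longrightarrow> v \<in> rhombus_closure P \<Longrightarrow> w \<in> rhombus_closure P \<Longrightarrow>
    tri_adj u v \<Longrightarrow> tri_adj w u \<Longrightarrow> tri_adj w v \<Longrightarrow> x = u + v - w \<Longrightarrow> x \<in> P \<Longrightarrow>
    x \<in> rhombus_closure P"

lemma rhombus_closure_subset: "rhombus_closure P \<subseteq> P"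
  by (auto elim: rhombus_closure.cases)

lemma rhombus_closure_rigid:
  fixes q :: "int \<times> int \<Rightarrow> real^2"
  assumes inj: "inj_on q P"
    and unit: "\<And>z w. (z, w) \<in> lattice_edges P \<Longrightarrow> dist (q z) (q w) = 1"
    and z: "z \<in> rhombus_closure P"
  shows "q z = affine_extension q z"
  using z
proof induction
  case (base z)
  then show ?case by (auto simp: affine_extension_def)
next
  case (rhombus u v w x)
  have P: "u \<in> P" "v \<in> P" "w \<in> P" "x \<in> P"
    using rhombus rhombus_closure_subset by blast+
  note adj = tri_adj_rhombus[OF rhombus.hyps(4,5,6)]
  have "q x \<noteq> q w"
    using inj P adj(3) rhombus.hyps(7) by (auto dest: inj_onD)
  then have "q x = q u + q v - q w"
    using P rhombus.hyps(4-7) adj(1,2)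
    by (intro rhombus_fourth_vertex) (auto intro!: unit simp: lattice_edges_def)
  then show ?case
    using rhombus.IH rhombus.hyps(7) by (simp add: affine_extension_rhombus)
qed

lemma rhombus_closure_reaches_origin:
  assumes "0 \<in> P" "z \<in> rhombus_closure P"
  shows "(z, 0) \<in> (lattice_edges P)\<^sup>*"
  using assms(2)
proof induction
  case (base z)
  then have "z = 0 \<or> (z, 0) \<in> lattice_edges P"
    using assms(1) by (auto simp: lattice_edges_def tri_adj_def tri_units_def zero_prod_def)
  then show ?case by auto
next
  case (rhombus u v w x)
  have "u \<in> P" using rhombus.hyps(1) rhombus_closure_subset by blast
  moreover have "tri_adj x u"
    using tri_adj_rhombus(1)[OF rhombus.hyps(4-6)] rhombus.hyps(7) by simp
  ultimately have "(x, u) \<in> lattice_edges P"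
    using rhombus.hyps(8) by (simp add: lattice_edges_def)
  then show ?case using rhombus.IH(1) by (rule converse_rtrancl_into_rtrancl)
qed

lemma rhombus_closure_ladder:
  assumes step: "\<And>k. a (Suc k) = a k + d"
    and units: "d \<in> tri_units" "e \<in> tri_units" "d - e \<in> tri_units"
    and in_P: "\<And>k. k \<le> n \<Longrightarrow> a k \<in> P \<and> a k + e \<in> P"
    and start: "a 0 \<in> rhombus_closure P" "a 0 + e \<in> rhombus_closure P" "a 1 \<in> rhombus_closure P"
    and k: "k \<le> n"
  shows "a k \<in> rhombus_closure P \<and> a k + e \<in> rhombus_closure P"
  using k
proof (induction k rule: less_induct)
  case (less k)
  consider "k = 0" | "k = 1" | m where "k = Suc (Suc m)"
    by (metis One_nat_def not0_implies_Suc)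
  then show ?case
  proof cases
    case 1
    then show ?thesis using start by simp
  next
    case 2
    have "a 1 + e \<in> rhombus_closure P"
      by (rule rhombus_closure.rhombus[of "a 0 + e" P "a 1" "a 0"])
         (use start in_P[OF less.prems] units step[of 0] 2 in \<open>auto simp: tri_adj_def algebra_simps\<close>)
    then show ?thesis using 2 start by simp
  next
    case 3
    have IH: "a m \<in> rhombus_closure P" "a m + e \<in> rhombus_closure P"
      "a (Suc m) \<in> rhombus_closure P" "a (Suc m) + e \<in> rhombus_closure P"
      using less.IH[of m] less.IH[of "Suc m"] less.prems 3 by simp_all
    have next_a: "a k \<in> rhombus_closure P"
      by (rule rhombus_closure.rhombus[of "a (Suc m)" P "a (Suc m) + e" "a m + e"])
         (use IH units in_P[OF less.prems] step[of m] step[of "Suc m"] 3 in \<open>auto simp: tri_adj_def algebra_simps\<close>)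
    have "a k + e \<in> rhombus_closure P"
      by (rule rhombus_closure.rhombus[of "a (Suc m) + e" P "a k" "a (Suc m)"])
         (use IH next_a units in_P[OF less.prems] step[of "Suc m"] 3 in \<open>auto simp: tri_adj_def algebra_simps\<close>)
    then show ?thesis using next_a by simp
  qed
qed

section \<open>The comb\<close>

definition tooth :: "nat \<Rightarrow> (int \<times> int) set" where
  "tooth i = {(4 * int i, 1), (4 * int i + 1, 1), (4 * int i + 1, 0)}"

definition comb :: "nat \<Rightarrow> nat set \<Rightarrow> (int \<times> int) set" where
  "comb N A = {0..1} \<times> {0..3} \<union> {0..4 * int N + 2} \<times> {2..3} \<union> (\<Union>i\<in>A \<inter> {1..N}. tooth i)"

definition seam :: "(int \<times> int) set" where
  "seam = {(0, 0), (1, 0)}"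

text \<open>The reflection in the x-axis, in skew coordinates.\<close>

definition reflect :: "int \<times> int \<Rightarrow> int \<times> int" where
  "reflect z = (fst z + snd z, - snd z)"

lemma reflect_reflect [simp]: "reflect (reflect z) = z"
  by (simp add: reflect_def)

lemma inj_reflect: "inj reflect"
  by (metis injI reflect_reflect)

lemma reflect_axis: "snd z = 0 \<Longrightarrow> reflect z = z"
  by (cases z) (simp add: reflect_def)

lemma reflect_seam: "s \<in> seam \<Longrightarrow> reflect s = s"
  by (auto simp: seam_def reflect_axis)

lemma reflect_tri_units: "reflect d \<in> tri_units \<longleftrightarrow> d \<in> tri_units"
  by (cases d) (auto simp: reflect_def tri_units_def)

lemma tri_adj_reflect [simp]: "tri_adj (reflect z) (reflect w) \<longleftrightarrow> tri_adj z w"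
proof -
  have "reflect w - reflect z = reflect (w - z)" by (simp add: reflect_def)
  then show ?thesis by (simp add: tri_adj_def reflect_tri_units)
qed

lemma seam_subset_comb: "seam \<subseteq> comb N A"
  by (auto simp: seam_def comb_def tooth_def)

lemma finite_comb: "finite (comb N A)"
  by (auto simp: comb_def tooth_def)

lemma card_comb: "card (comb N A) \<le> 16 * N + 12"
proof -
  have "comb N A \<subseteq> {0..4 * int N + 2} \<times> {0..3}"
    by (auto simp: comb_def tooth_def)
  then have "card (comb N A) \<le> card ({0..4 * int N + 2} \<times> {0..3::int})"
    by (rule card_mono[rotated]) simp
  also have "\<dots> = 16 * N + 12"
    by (simp add: card_cartesian_product nat_add_distrib nat_mult_distrib)
  finally show ?thesis .
qed

lemma comb_cases:
  assumes "z \<in> comb N A"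
  obtains "z \<in> {0..1} \<times> {0..3}" | "z \<in> {0..4 * int N + 2} \<times> {2..3}"
    | i where "i \<in> A" "1 \<le> i" "i \<le> N" "z \<in> tooth i"
proof -
  have "z \<in> {0..1} \<times> {0..3} \<or> z \<in> {0..4 * int N + 2} \<times> {2..3} \<or> (\<exists>i\<in>A \<inter> {1..N}. z \<in> tooth i)"
    using assms by (simp only: comb_def Un_iff UN_iff disj_assoc)
  then show ?thesis using that by (meson IntE atLeastAtMost_iff)
qed

lemma comb_block_rhombus_closure:
  "k \<le> 3 \<Longrightarrow> (0, int k) \<in> rhombus_closure (comb N A) \<and> (1, int k) \<in> rhombus_closure (comb N A)"
  by (rule rhombus_closure_ladder[where a = "\<lambda>k. (0, int k)" and d = "(0, 1)" and e = "(1, 0)"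
        and n = 3, simplified])
     (auto intro: rhombus_closure.base simp: comb_def tri_units_def zero_prod_def)

lemma comb_strip_rhombus_closure:
  "k \<le> 4 * N + 2 \<Longrightarrow>
    (int k, 2) \<in> rhombus_closure (comb N A) \<and> (int k, 3) \<in> rhombus_closure (comb N A)"
  by (rule rhombus_closure_ladder[where a = "\<lambda>k. (int k, 2)" and d = "(1, 0)" and e = "(0, 1)"
        and n = "4 * N + 2", simplified])
     (use comb_block_rhombus_closure[of 2] comb_block_rhombus_closure[of 3] in \<open>auto simp: comb_def tri_units_def\<close>)

lemma tooth_subset_rhombus_closure:
  assumes "i \<in> A" "1 \<le> i" "i \<le> N"
  shows "tooth i \<subseteq> rhombus_closure (comb N A)"
proof -
  let ?P = "comb N A" and ?C = "rhombus_closure (comb N A)"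
  define k where "k = 4 * int i"
  have strip: "(x, 2) \<in> ?C" "(x, 3) \<in> ?C" if "k - 1 \<le> x" "x \<le> k + 1" for x
    using comb_strip_rhombus_closure[of "nat x"] that assms(2,3) by (auto simp: k_def)
  have in_P: "(k, 1) \<in> ?P" "(k + 1, 1) \<in> ?P" "(k + 1, 0) \<in> ?P"
    using assms by (auto simp: comb_def tooth_def k_def)
  have t1: "(k, 1) \<in> ?C"
    by (rule rhombus_closure.rhombus[of "(k, 2)" _ "(k - 1, 2)" "(k - 1, 3)"])
       (use strip in_P in \<open>auto simp: tri_adj_def tri_units_def\<close>)
  have t2: "(k + 1, 1) \<in> ?C"
    by (rule rhombus_closure.rhombus[of "(k, 2)" _ "(k + 1, 2)" "(k, 3)"])
       (use strip in_P in \<open>auto simp: tri_adj_def tri_units_def\<close>)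
  have t3: "(k + 1, 0) \<in> ?C"
    by (rule rhombus_closure.rhombus[of "(k + 1, 1)" _ "(k, 1)" "(k, 2)"])
       (use strip in_P t1 t2 in \<open>auto simp: tri_adj_def tri_units_def\<close>)
  show ?thesis using t1 t2 t3 by (simp add: tooth_def k_def)
qed

lemma comb_subset_rhombus_closure: "comb N A \<subseteq> rhombus_closure (comb N A)"
proof
  fix z assume "z \<in> comb N A"
  then show "z \<in> rhombus_closure (comb N A)"
  proof (cases rule: comb_cases)
    case 1
    obtain x y where z: "z = (x, y)" by force
    then have "x = 0 \<or> x = 1" "0 \<le> y" "y \<le> 3" using 1 by auto
    then show ?thesis using comb_block_rhombus_closure[of "nat y"] z by auto
  next
    case 2
    obtain x y where z: "z = (x, y)" by force
    then have "y = 2 \<or> y = 3" "0 \<le> x" "x \<le> 4 * int N + 2" using 2 by auto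
    then show ?thesis using comb_strip_rhombus_closure[of "nat x"] z by auto
  qed (use tooth_subset_rhombus_closure in blast)
qed

lemma comb_low_row:
  assumes "z \<in> comb N A" "snd z \<le> 1" "z \<notin> seam"
  shows "z \<in> {(0, 1), (1, 1)} \<or> (\<exists>i\<in>A. 1 \<le> i \<and> z \<in> tooth i)"
  using assms(1)
proof (cases rule: comb_cases)
  case 1
  then show ?thesis using assms(2,3) by (auto simp: seam_def)
next
  case 2
  then show ?thesis using assms(2) by auto
qed blast

lemma comb_separated:
  assumes AB: "A \<inter> B = {}" and z: "z \<in> comb N A - seam" and w: "w \<in> reflect ` comb N B - seam"
  shows "z \<noteq> w \<and> \<not> tri_adj z w"
proof (rule ccontr)
  assume "\<not> ?thesis"
  then have near: "\<bar>fst w - fst z\<bar> \<le> 1" "\<bar>snd w - snd z\<bar> \<le> 1"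
    using tri_adj_near[of z w] by auto
  obtain w' where w': "w' \<in> comb N B" "w = reflect w'" using w by blast
  have "w' \<notin> seam"
  proof
    assume "w' \<in> seam"
    then show False using w w'(2) reflect_seam by simp
  qed
  have "0 \<le> snd z" "0 \<le> snd w'" using z w' by (auto simp: comb_def tooth_def)
  then have "snd z \<le> 1" "snd w' \<le> 1" using near(2) by (auto simp: w' reflect_def)
  then have low_z: "z \<in> {(0, 1), (1, 1)} \<or> (\<exists>i\<in>A. 1 \<le> i \<and> z \<in> tooth i)"
    and low_w: "w' \<in> {(0, 1), (1, 1)} \<or> (\<exists>j\<in>B. 1 \<le> j \<and> w' \<in> tooth j)"
    using comb_low_row[of z N A] comb_low_row[of w' N B] z w' \<open>w' \<notin> seam\<close> by auto
  show False
  proof (cases "z \<in> {(0, 1), (1, 1)}"; cases "w' \<in> {(0, 1), (1, 1)}")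
    assume "z \<notin> {(0, 1), (1, 1)}" "w' \<notin> {(0, 1), (1, 1)}"
    then obtain i j where "i \<in> A" "j \<in> B" "z \<in> tooth i" "w' \<in> tooth j"
      using low_z low_w by blast
    moreover have "int i \<noteq> int j"
      using AB \<open>i \<in> A\<close> \<open>j \<in> B\<close> by auto
    then have "int i + 1 \<le> int j \<or> int j + 1 \<le> int i" by linarith
    ultimately show False
      using near by (auto simp: tooth_def w' reflect_def)
  qed (use low_z low_w near in \<open>auto simp: tooth_def w' reflect_def\<close>)
qed

lemma lattice_nbhd_comb: "lattice_nbhd (comb N A) seam = {(0, 0), (1, 0), (0, 1), (1, 1)}"
proof (intro equalityI subsetI)
  fix z assume "z \<in> lattice_nbhd (comb N A) seam"
  then consider "z \<in> seam" | s where "z \<in> comb N A" "s \<in> seam" "tri_adj s z"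
    unfolding lattice_nbhd_def by blast
  then show "z \<in> {(0, 0), (1, 0), (0, 1), (1, 1)}"
  proof cases
    case 2
    then have "snd z \<le> 1" by (auto simp: seam_def tri_adj_def tri_units_def prod_eq_iff)
    then show ?thesis
      using 2 comb_low_row[of z N A] by (auto simp: seam_def tri_adj_def tri_units_def tooth_def prod_eq_iff)
  qed (auto simp: seam_def)
qed (auto simp: lattice_nbhd_def seam_def comb_def tri_adj_def tri_units_def)

lemma lattice_nbhd_reflect: "lattice_nbhd (reflect ` P) seam = reflect ` lattice_nbhd P seam"
  unfolding lattice_nbhd_def image_Un
  by (auto simp: reflect_seam image_iff) (metis reflect_seam tri_adj_reflect reflect_reflect)+

section \<open>Gluing lattice graphs\<close>

definition encode_point :: "int \<times> int \<Rightarrow> nat" where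
  "encode_point z = prod_encode (int_encode (fst z), int_encode (snd z))"

definition decode_point :: "nat \<Rightarrow> int \<times> int" where
  "decode_point n = (int_decode (fst (prod_decode n)), int_decode (snd (prod_decode n)))"

lemma decode_encode_point [simp]: "decode_point (encode_point z) = z"
  by (simp add: encode_point_def decode_point_def)

lemma encode_decode_point [simp]: "encode_point (decode_point n) = n"
  by (simp add: encode_point_def decode_point_def)

lemma inj_encode_point: "inj encode_point"
  by (metis decode_encode_point injI)

lemma encode_point_image_iff: "n \<in> encode_point ` P \<longleftrightarrow> decode_point n \<in> P"
  by (metis decode_encode_point encode_decode_point image_iff)

definition point_of :: "nat + nat \<Rightarrow> int \<times> int" where
  "point_of = case_sum decode_point decode_point"

definition lattice_graph :: "(int \<times> int) set \<Rightarrow> nat graph" where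
  "lattice_graph P = (encode_point ` P, map_prod encode_point encode_point ` lattice_edges P)"

abbreviation lattice_glue ::
  "(int \<times> int) set \<Rightarrow> (int \<times> int) set \<Rightarrow> (int \<times> int) set \<Rightarrow> (nat + nat) graph" where
  "lattice_glue P Q S \<equiv> glue (lattice_graph P) (lattice_graph Q) (encode_point ` S)"

lemma verts_lattice_graph: "verts (lattice_graph P) = encode_point ` P"
  by (simp add: lattice_graph_def verts_def)

lemma edges_lattice_graph:
  "(a, b) \<in> edges (lattice_graph P) \<longleftrightarrow> (decode_point a, decode_point b) \<in> lattice_edges P"
proof
  assume "(a, b) \<in> edges (lattice_graph P)"
  then obtain z w where "(z, w) \<in> lattice_edges P" "a = encode_point z" "b = encode_point w"
    by (auto simp: lattice_graph_def edges_def)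
  then show "(decode_point a, decode_point b) \<in> lattice_edges P" by simp
next
  assume "(decode_point a, decode_point b) \<in> lattice_edges P"
  moreover have "(a, b) = map_prod encode_point encode_point (decode_point a, decode_point b)" by simp
  ultimately show "(a, b) \<in> edges (lattice_graph P)"
    unfolding lattice_graph_def edges_def snd_conv by (rule rev_image_eqI)
qed

lemma simple_graph_lattice_graph: "finite P \<Longrightarrow> simple_graph (lattice_graph P)"
  by (auto simp: simple_graph_def verts_lattice_graph edges_lattice_graph encode_point_image_iff
      lattice_edges_def sym_def irrefl_def tri_adj_irrefl intro: tri_adj_sym)

lemma verts_lattice_glue:
  "verts (lattice_glue P Q S) = Inl ` encode_point ` P \<union> Inr ` encode_point ` (Q - S)"
  by (simp add: glue_def verts_def lattice_graph_def image_set_diff[OF inj_encode_point])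

lemma glue_map_encode_point:
  "glue_map (encode_point ` S) (encode_point z) = (if z \<in> S then Inl (encode_point z) else Inr (encode_point z))"
  by (simp add: glue_map_def encode_point_image_iff)

lemma lattice_glue_left_edge:
  "(z, w) \<in> lattice_edges P \<Longrightarrow> (Inl (encode_point z), Inl (encode_point w)) \<in> edges (lattice_glue P Q S)"
  by (auto simp: glue_def edges_def[of "(_, _)"] edges_lattice_graph)

lemma lattice_glue_right_edge:
  "(z, w) \<in> lattice_edges Q \<Longrightarrow>
    (glue_map (encode_point ` S) (encode_point z), glue_map (encode_point ` S) (encode_point w))
      \<in> edges (lattice_glue P Q S)"
proof -
  assume "(z, w) \<in> lattice_edges Q"
  then have "(encode_point z, encode_point w) \<in> edges (lattice_graph Q)"
    by (simp add: edges_lattice_graph)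
  then show ?thesis unfolding glue_def edges_def[of "(_, _)"] snd_conv by blast
qed

lemma Inl_in_verts_lattice_glue: "Inl n \<in> verts (lattice_glue P Q S) \<longleftrightarrow> decode_point n \<in> P"
  by (auto simp: verts_lattice_glue encode_point_image_iff)

lemma Inr_in_verts_lattice_glue: "Inr n \<in> verts (lattice_glue P Q S) \<longleftrightarrow> decode_point n \<in> Q - S"
  by (auto simp: verts_lattice_glue encode_point_image_iff)

lemma Inl_eq_glue_map_encode_point:
  "Inl b = glue_map (encode_point ` S) a \<longleftrightarrow> a = b \<and> decode_point a \<in> S"
  by (auto simp: glue_map_def encode_point_image_iff)

lemma Inr_eq_glue_map_encode_point:
  "Inr b = glue_map (encode_point ` S) a \<longleftrightarrow> a = b \<and> decode_point a \<notin> S"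
  by (auto simp: glue_map_def encode_point_image_iff)

lemma edges_lattice_glue_iff:
  "(x, y) \<in> edges (lattice_glue P Q S) \<longleftrightarrow>
    (\<exists>a b. x = Inl a \<and> y = Inl b \<and> (decode_point a, decode_point b) \<in> lattice_edges P) \<or>
    (\<exists>a b. x = glue_map (encode_point ` S) a \<and> y = glue_map (encode_point ` S) b \<and>
       (decode_point a, decode_point b) \<in> lattice_edges Q)"
  by (simp add: glue_def edges_def[of "(_, _)"] edges_lattice_graph[symmetric])

lemma edges_lattice_glue:
  assumes "S \<subseteq> P" "S \<subseteq> Q"
  shows "(x, y) \<in> edges (lattice_glue P Q S) \<longleftrightarrow>
    x \<in> verts (lattice_glue P Q S) \<and> y \<in> verts (lattice_glue P Q S) \<and>
    tri_adj (point_of x) (point_of y) \<and> (isl x = isl y \<or> point_of x \<in> S \<or> point_of y \<in> S)"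
  using assms
  by (cases x; cases y)
     (auto simp: edges_lattice_glue_iff Inl_eq_glue_map_encode_point Inr_eq_glue_map_encode_point
       Inl_in_verts_lattice_glue Inr_in_verts_lattice_glue point_of_def lattice_edges_def)

lemma rtrancl_map:
  assumes "\<And>a b. (a, b) \<in> r \<Longrightarrow> (f a, f b) \<in> s" and "(x, y) \<in> r\<^sup>*"
  shows "(f x, f y) \<in> s\<^sup>*"
  using assms(2) by induction (auto intro: rtrancl_into_rtrancl assms(1))

lemma sym_edges_lattice_glue: "sym (edges (lattice_glue P Q S))"
  unfolding sym_def edges_lattice_glue_iff lattice_edges_def by (blast intro: tri_adj_sym)

lemma simple_graph_lattice_glue:
  assumes "finite P" "finite Q" "S \<subseteq> P" "S \<subseteq> Q"
  shows "simple_graph (lattice_glue P Q S)"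
  unfolding simple_graph_def
proof (intro conjI)
  show "finite (verts (lattice_glue P Q S))"
    using assms(1,2) by (simp add: verts_lattice_glue)
  show "edges (lattice_glue P Q S) \<subseteq> verts (lattice_glue P Q S) \<times> verts (lattice_glue P Q S)"
    using edges_lattice_glue[OF assms(3,4)] by auto
  show "sym (edges (lattice_glue P Q S))"
    by (rule sym_edges_lattice_glue)
  show "irrefl (edges (lattice_glue P Q S))"
    unfolding irrefl_def edges_lattice_glue[OF assms(3,4)] by (simp add: tri_adj_irrefl)
qed

lemma card_verts_lattice_glue:
  assumes "finite P" "finite Q"
  shows "card (verts (lattice_glue P Q S)) \<le> card P + card Q"
proof -
  have "card (verts (lattice_glue P Q S))
      \<le> card (Inl ` encode_point ` P :: (nat + nat) set) + card (Inr ` encode_point ` (Q - S) :: (nat + nat) set)"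
    unfolding verts_lattice_glue by (rule card_Un_le)
  also have "\<dots> = card P + card (Q - S)"
    by (simp add: card_image inj_on_subset[OF inj_encode_point])
  also have "\<dots> \<le> card P + card Q"
    using assms(2) by (simp add: card_mono)
  finally show ?thesis .
qed

lemma connected_lattice_glue:
  assumes "0 \<in> S"
    and reach_P: "\<And>z. z \<in> P \<Longrightarrow> (z, 0) \<in> (lattice_edges P)\<^sup>*"
    and reach_Q: "\<And>z. z \<in> Q \<Longrightarrow> (z, 0) \<in> (lattice_edges Q)\<^sup>*"
  shows "connected_graph (lattice_glue P Q S)"
proof -
  let ?G = "lattice_glue P Q S" and ?o = "Inl (encode_point 0) :: nat + nat"
  have to_origin: "(x, ?o) \<in> (edges ?G)\<^sup>*" if "x \<in> verts ?G" for x
  proof -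
    from that consider z where "z \<in> P" "x = Inl (encode_point z)"
      | z where "z \<in> Q" "x = glue_map (encode_point ` S) (encode_point z)"
      by (auto simp: verts_lattice_glue glue_map_encode_point)
    then show ?thesis
    proof cases
      case 1
      have "((\<lambda>z. Inl (encode_point z)) z, (\<lambda>z. Inl (encode_point z)) 0) \<in> (edges ?G)\<^sup>*"
        using reach_P[OF 1(1)] by (rule rtrancl_map[rotated]) (rule lattice_glue_left_edge)
      then show ?thesis using 1 by simp
    next
      case 2
      let ?f = "\<lambda>z. glue_map (encode_point ` S) (encode_point z)"
      have "(?f z, ?f 0) \<in> (edges ?G)\<^sup>*"
        using reach_Q[OF 2(1)] by (rule rtrancl_map[rotated]) (rule lattice_glue_right_edge)
      then show ?thesis using 2 assms(1) by (simp add: glue_map_encode_point)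
    qed
  qed
  have "sym ((edges ?G)\<^sup>*)"
    by (rule sym_rtrancl[OF sym_edges_lattice_glue])
  then show ?thesis
    unfolding connected_graph_def using to_origin by (meson rtrancl_trans symD)
qed

lemma unit_distance_lattice_glue:
  assumes fin: "finite P" "finite Q" and S: "S \<subseteq> P" "S \<subseteq> Q"
    and sep: "\<And>z w. z \<in> P - S \<Longrightarrow> w \<in> Q - S \<Longrightarrow> z \<noteq> w \<and> \<not> tri_adj z w"
  shows "unit_distance_graph (lattice_glue P Q S)"
proof -
  let ?G = "lattice_glue P Q S"
  have cross: "decode_point a \<in> S"
    if "Inl a \<in> verts ?G" "Inr b \<in> verts ?G"
      "decode_point a = decode_point b \<or> tri_adj (decode_point a) (decode_point b) \<or>
       tri_adj (decode_point b) (decode_point a)"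
    for a b
    using that sep[of "decode_point a" "decode_point b"] tri_adj_sym[of "decode_point b" "decode_point a"]
    by (auto simp: Inl_in_verts_lattice_glue Inr_in_verts_lattice_glue)
  have decode_inj: "a = b" if "decode_point a = decode_point b" for a b
    by (metis that encode_decode_point)
  have inj: "inj_on point_of (verts ?G)"
  proof (rule inj_onI)
    fix x y assume "x \<in> verts ?G" "y \<in> verts ?G" "point_of x = point_of y"
    then show "x = y"
      by (cases x; cases y)
         (auto simp: point_of_def Inr_in_verts_lattice_glue dest: decode_inj cross)
  qed
  have "(x, y) \<in> edges ?G \<longleftrightarrow> tri_adj (point_of x) (point_of y)"
    if "x \<in> verts ?G" "y \<in> verts ?G" for x y
    using that cross
    by (cases x; cases y) (auto simp: edges_lattice_glue[OF S] point_of_def)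
  then show ?thesis
    unfolding unit_distance_graph_def
    using simple_graph_lattice_glue[OF fin S] inj_tri_point inj
    by (intro conjI exI[of _ "tri_point \<circ> point_of"])
       (auto simp: dist_tri_point_eq_1_iff intro: comp_inj_on inj_on_subset)
qed

lemma realization_rhombus_closure_rigid:
  fixes p :: "'v \<Rightarrow> real^2"
  assumes inj: "inj_on p (verts G)"
    and unit: "\<forall>x\<in>verts G. \<forall>y\<in>verts G. (x, y) \<in> edges G \<longleftrightarrow> dist (p x) (p y) = 1"
    and inj_f: "inj_on f P" and into: "f ` P \<subseteq> verts G"
    and edge: "\<And>z w. (z, w) \<in> lattice_edges P \<Longrightarrow> (f z, f w) \<in> edges G"
    and t: "t \<in> rhombus_closure P"
  shows "p (f t) = affine_extension (p \<circ> f) t"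
proof (rule rhombus_closure_rigid[where q = "p \<circ> f", simplified])
  show "inj_on (p \<circ> f) P"
    using inj_f into inj by (simp add: comp_inj_on inj_on_subset)
  show "dist (p (f z)) (p (f w)) = 1" if "(z, w) \<in> lattice_edges P" for z w
    using unit into edge[OF that] that by (auto simp: lattice_edges_def)
qed (rule t)

text \<open>On the x-axis both affine extensions depend only on the images of the shared seam points,
  so the two copies of \<open>t\<close> are realized at the same point.\<close>

lemma not_unit_distance_lattice_glue_reflect:
  assumes seam: "seam \<subseteq> P" "seam \<subseteq> P'"
    and rigid: "t \<in> rhombus_closure P" "t \<in> rhombus_closure P'"
    and t: "snd t = 0" "t \<notin> seam"
  shows "\<not> unit_distance_graph (lattice_glue P (reflect ` P') seam)"
proof
  let ?G = "lattice_glue P (reflect ` P') seam"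
  assume "unit_distance_graph ?G"
  then obtain p :: "nat + nat \<Rightarrow> real^2" where inj: "inj_on p (verts ?G)"
    and unit: "\<forall>x\<in>verts ?G. \<forall>y\<in>verts ?G. (x, y) \<in> edges ?G \<longleftrightarrow> dist (p x) (p y) = 1"
    unfolding unit_distance_graph_def by blast
  note realize = realization_rhombus_closure_rigid[OF inj unit]
  define left :: "int \<times> int \<Rightarrow> nat + nat" where "left z = Inl (encode_point z)" for z
  define right where "right z = glue_map (encode_point ` seam) (encode_point (reflect z))" for z
  have "p (left t) = affine_extension (p \<circ> left) t"
  proof (rule realize)
    show "inj_on left P" by (auto simp: left_def inj_on_def dest: injD[OF inj_encode_point])
    show "left ` P \<subseteq> verts ?G" by (auto simp: left_def verts_lattice_glue)
    show "(left z, left w) \<in> edges ?G" if "(z, w) \<in> lattice_edges P" for z w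
      using that unfolding left_def by (rule lattice_glue_left_edge)
  qed (rule rigid(1))
  moreover have "p (right t) = affine_extension (p \<circ> right) t"
  proof (rule realize)
    show "inj_on right P'"
      by (auto simp: right_def inj_on_def glue_map_encode_point split: if_splits
          dest: injD[OF inj_encode_point] injD[OF inj_reflect])
    show "right ` P' \<subseteq> verts ?G"
      using seam by (auto simp: right_def verts_lattice_glue glue_map_encode_point)
    show "(right z, right w) \<in> edges ?G" if "(z, w) \<in> lattice_edges P'" for z w
      using that unfolding right_def
      by (intro lattice_glue_right_edge) (auto simp: lattice_edges_def)
  qed (rule rigid(2))
  moreover have "left s = right s" if "s \<in> seam" for s
    using that by (simp add: left_def right_def glue_map_encode_point reflect_seam)
  ultimately have "p (left t) = p (right t)"
    using t(1) by (simp add: affine_extension_def seam_def zero_prod_def)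
  moreover have "reflect t = t" using t(1) by (rule reflect_axis)
  then have right_t: "right t = Inr (encode_point t)"
    using t(2) by (simp add: right_def glue_map_encode_point)
  moreover have "t \<in> P" "t \<in> reflect ` P'"
    using rigid rhombus_closure_subset \<open>reflect t = t\<close> by (blast, metis image_eqI subsetD)
  then have "left t \<in> verts ?G" "right t \<in> verts ?G"
    using right_t t(2) by (auto simp: left_def verts_lattice_glue)
  ultimately show False
    using inj by (auto simp: left_def dest: inj_onD)
qed

lemma closed_nbhd_subset_verts: "T \<subseteq> verts G \<Longrightarrow> closed_nbhd G T \<subseteq> verts G"
  by (auto simp: closed_nbhd_def)

lemma closed_nbhd_lattice_glue:
  assumes "S \<subseteq> P" "S \<subseteq> Q"
  shows "closed_nbhd (lattice_glue P Q S) (Inl ` encode_point ` S) =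
    Inl ` encode_point ` lattice_nbhd P S \<union> Inr ` encode_point ` (lattice_nbhd Q S - S)"
proof (intro set_eqI)
  fix x :: "nat + nat"
  show "x \<in> closed_nbhd (lattice_glue P Q S) (Inl ` encode_point ` S) \<longleftrightarrow>
    x \<in> Inl ` encode_point ` lattice_nbhd P S \<union> Inr ` encode_point ` (lattice_nbhd Q S - S)"
    using assms
    by (cases x) (auto simp: closed_nbhd_def edges_lattice_glue[OF assms] lattice_nbhd_def
        Inl_in_verts_lattice_glue Inr_in_verts_lattice_glue point_of_def encode_point_image_iff
        inj_image_mem_iff[OF inj_Inl] inj_image_mem_iff[OF inj_Inr])
qed

lemma induced_iso_id_lattice_glue:
  assumes S: "S \<subseteq> P" "S \<subseteq> Q" "S \<subseteq> P'" "S \<subseteq> Q'"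
    and W: "closed_nbhd (lattice_glue P Q S) (Inl ` encode_point ` S) = W"
      "closed_nbhd (lattice_glue P' Q' S) (Inl ` encode_point ` S) = W"
  shows "induced_iso (lattice_glue P Q S) W (lattice_glue P' Q' S) W id"
proof -
  have "Inl ` encode_point ` S \<subseteq> verts (lattice_glue P Q S)"
    "Inl ` encode_point ` S \<subseteq> verts (lattice_glue P' Q' S)"
    using S by (auto simp: verts_lattice_glue)
  then have "W \<subseteq> verts (lattice_glue P Q S)" "W \<subseteq> verts (lattice_glue P' Q' S)"
    using W closed_nbhd_subset_verts by blast+
  then show ?thesis
    unfolding induced_iso_def
    using edges_lattice_glue[OF S(1,2)] edges_lattice_glue[OF S(3,4)] by auto
qed

abbreviation comb_glue :: "nat \<Rightarrow> nat set \<Rightarrow> nat set \<Rightarrow> (nat + nat) graph" where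
  "comb_glue N A B \<equiv> lattice_glue (comb N A) (reflect ` comb N B) seam"

lemma seam_subset_reflect_comb: "seam \<subseteq> reflect ` comb N B"
  using seam_subset_comb by (metis image_mono image_cong image_ident reflect_seam)

lemma connected_comb_glue: "connected_graph (comb_glue N A B)"
proof (rule connected_lattice_glue)
  have reach: "(z, 0) \<in> (lattice_edges (comb N X))\<^sup>*" if "z \<in> comb N X" for z X
    using that comb_subset_rhombus_closure seam_subset_comb
    by (intro rhombus_closure_reaches_origin) (auto simp: seam_def zero_prod_def)
  show "0 \<in> seam" by (simp add: seam_def zero_prod_def)
  show "(z, 0) \<in> (lattice_edges (comb N A))\<^sup>*" if "z \<in> comb N A" for z
    using reach that .
  show "(z, 0) \<in> (lattice_edges (reflect ` comb N B))\<^sup>*" if z: "z \<in> reflect ` comb N B" for z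
  proof -
    obtain z' where "z' \<in> comb N B" "z = reflect z'" using z by blast
    moreover have "(reflect z', reflect 0) \<in> (lattice_edges (reflect ` comb N B))\<^sup>*"
      using reach[OF \<open>z' \<in> comb N B\<close>]
      by (rule rtrancl_map[rotated]) (auto simp: lattice_edges_def)
    ultimately show ?thesis by (simp add: reflect_def zero_prod_def)
  qed
qed

lemma card_verts_comb_glue:
  assumes "0 < N"
  shows "card (verts (comb_glue N A B)) \<le> 56 * N"
proof -
  have "card (verts (comb_glue N A B)) \<le> card (comb N A) + card (reflect ` comb N B)"
    by (simp add: card_verts_lattice_glue finite_comb)
  also have "\<dots> \<le> (16 * N + 12) + (16 * N + 12)"
    by (meson add_mono card_comb card_image_le finite_comb order_trans)
  also have "\<dots> \<le> 56 * N"
    using assms by simp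
  finally show ?thesis .
qed

lemma closed_nbhd_comb_glue:
  "closed_nbhd (comb_glue N A B) (Inl ` encode_point ` seam) =
     Inl ` encode_point ` {(0, 0), (1, 0), (0, 1), (1, 1)} \<union> Inr ` encode_point ` {(1, -1), (2, -1)}"
proof -
  have "lattice_nbhd (reflect ` comb N B) seam = reflect ` {(0, 0), (1, 0), (0, 1), (1, 1)}"
    by (simp only: lattice_nbhd_reflect lattice_nbhd_comb)
  then have "lattice_nbhd (reflect ` comb N B) seam - seam = {(1, -1), (2, -1)}"
    by (auto simp: reflect_def seam_def)
  then show ?thesis
    by (simp add: closed_nbhd_lattice_glue seam_subset_comb seam_subset_reflect_comb lattice_nbhd_comb)
qed

lemma unit_distance_comb_glue_iff:
  assumes "A \<subseteq> {1..N}"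
  shows "unit_distance_graph (comb_glue N A B) \<longleftrightarrow> A \<inter> B = {}"
proof
  assume ud: "unit_distance_graph (comb_glue N A B)"
  show "A \<inter> B = {}"
  proof (rule ccontr)
    assume "A \<inter> B \<noteq> {}"
    then obtain i where "i \<in> A" "i \<in> B" by blast
    then have i: "i \<in> A" "i \<in> B" "1 \<le> i" "i \<le> N" using assms by auto
    let ?t = "(4 * int i + 1, 0)"
    have "?t \<in> comb N A" "?t \<in> comb N B" using i by (auto simp: comb_def tooth_def)
    then have "?t \<in> rhombus_closure (comb N A)" "?t \<in> rhombus_closure (comb N B)"
      using comb_subset_rhombus_closure by blast+
    moreover have "?t \<notin> seam" using i by (simp add: seam_def)
    ultimately show False
      using not_unit_distance_lattice_glue_reflect[OF seam_subset_comb seam_subset_comb] ud by simp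
  qed
next
  assume "A \<inter> B = {}"
  then show "unit_distance_graph (comb_glue N A B)"
    by (intro unit_distance_lattice_glue comb_separated[where N = N])
       (auto simp: finite_comb seam_subset_comb seam_subset_reflect_comb)
qed

theorem theorem5p3:
  shows "disjointness_expressing unit_distance_graph 6 1"
  unfolding disjointness_expressing_def
proof (intro exI[of _ "56::real"] conjI allI impI, goal_cases alpha_pos construction)
  case alpha_pos
  show ?case by simp
next
  case (construction N)
  show ?case
  proof (rule exI[of _ "encode_point ` seam"], rule exI[of _ "\<lambda>X. lattice_graph (comb N X)"],
      rule exI[of _ "\<lambda>X. lattice_graph (reflect ` comb N X)"], intro conjI allI impI)
    show "real (card (verts (comb_glue N A B))) \<le> 56 * real N powr (1 / real (1::nat))" for A B
      using card_verts_comb_glue[OF construction, of A B] by simp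
    show "card (closed_nbhd (comb_glue N A B) (Inl ` encode_point ` seam)) \<le> 6" for A B
      unfolding closed_nbhd_comb_glue by (rule order_trans[OF card_Un_le]) (simp add: card_insert_if)
    show "\<exists>f. induced_iso (comb_glue N A B) (closed_nbhd (comb_glue N A B) (Inl ` encode_point ` seam))
        (comb_glue N A' B') (closed_nbhd (comb_glue N A' B') (Inl ` encode_point ` seam)) f \<and>
        (\<forall>x\<in>encode_point ` seam. f (Inl x) = Inl x)" for A A' B B'
      by (intro exI[of _ id] conjI) (simp_all add: closed_nbhd_comb_glue induced_iso_id_lattice_glue
          seam_subset_comb seam_subset_reflect_comb)
  qed (simp_all add: simple_graph_lattice_graph finite_comb verts_lattice_graph seam_subset_comb
      seam_subset_reflect_comb image_mono connected_comb_glue unit_distance_comb_glue_iff)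
qed

end
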